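(* For any $\nu\ge1$ and $\delta>0$ there is a constant $C'(\nu,\delta)\ge1$ such that for all $x,y\ge0$ $$\binom{[x]+[y]}{[x]}^{\nu}B(\nu x+\delta,\nu y+\delta)\le\frac{C'(\nu,\delta)}{\big(\min(x+1,y+1)\big)^{(\nu+1)/2}}.$$
   Context: $[x]$ denotes the integer part of $x$. $B(x,y)=\int_0^1(1-t)^{x-1}t^{y-1}\,dt$ ($x,y>0$) is Euler's Beta function. *)

theory Defs
  imports "HOL-Analysis.Analysis"
begin

end

theory Submission
  imports Defs
begin

text \<open>
  With \<open>m = [x]\<close>, \<open>n = [y]\<close> and the Bernstein polynomial \<open>p(t) = C(m+n,m) t\<^sup>m (1-t)\<^sup>n\<close>,
  the integrand of \<open>C(m+n,m)\<^sup>\<nu> B(\<nu>x+\<delta>, \<nu>y+\<delta>)\<close> is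
  \<open>p(t)\<^sup>\<nu> t\<^bsup>\<nu>(x-m)+\<delta>-1\<^esup> (1-t)\<^bsup>\<nu>(y-n)+\<delta>-1\<^esup>\<close>.
  Since \<open>p \<le> 1\<close> it is dominated by \<open>t\<^bsup>\<delta>-1\<^esup> (1-t)\<^bsup>\<delta>-1\<^esup>\<close>, which settles the case
  \<open>min m n \<le> 1\<close>. Otherwise \<open>p\<^sup>\<nu> \<le> P\<^bsup>\<nu>-1\<^esup> p\<close> with \<open>P = p(m/(m+n))\<close> the maximum of \<open>p\<close>,
  and \<open>\<integral> p(t) t\<^sup>-\<^sup>1 (1-t)\<^sup>-\<^sup>1 = (m+n)/(mn)\<close>. To bound \<open>P\<close>, note that \<open>p \<ge> P/e\<close> on a window
  of width \<open>\<surd>(mn/(2(m+n)\<^sup>3))\<close> to the right of the mode while \<open>\<integral>p = 1/(m+n+1)\<close>; hence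
  \<open>P\<^sup>2 \<le> 2e\<^sup>2(m+n)/(mn) \<le> 4e\<^sup>2/min m n\<close>, and the two factors together decay like
  \<open>min m n\<^bsup>-(\<nu>+1)/2\<^esup>\<close>.
\<close>

lemma Beta_of_nat_plus_one:
  "Beta (real m + 1) (real n + 1) = fact m * fact n / fact (m + n + 1)"
proof -
  have "Gamma (real k + 1) = fact k" for k
    using Gamma_fact[of k, where 'a=real] by (simp add: add.commute)
  from this[of m] this[of n] this[of "m + n + 1"] show ?thesis
    by (simp add: Beta_def add_ac)
qed

lemma binomial_mult_Beta_plus_one:
  "real ((m + n) choose m) * Beta (real m + 1) (real n + 1) = 1 / (real m + real n + 1)"
proof -
  have "(fact (m + n + 1) :: real) = (real m + real n + 1) * fact (m + n)"
    by (simp add: add.commute)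
  then show ?thesis
    by (simp add: binomial_fact Beta_of_nat_plus_one)
qed

lemma binomial_mult_Beta:
  assumes "m \<ge> 1" "n \<ge> 1"
  shows "real ((m + n) choose m) * Beta (real m) (real n) = (real m + real n) / (real m * real n)"
proof -
  obtain k l where kl: "m = Suc k" "n = Suc l"
    using assms by (metis Suc_le_D One_nat_def)
  have Beta: "Beta (real m) (real n) = fact k * fact l / fact (k + l + 1)"
    using Beta_of_nat_plus_one[of k l] by (simp add: kl add.commute)
  have fact_sum: "(fact (m + n) :: real) = (real m + real n) * fact (k + l + 1)"
    by (simp add: kl add_ac)
  have fact_m: "(fact m :: real) = real m * fact k" and fact_n: "(fact n :: real) = real n * fact l"
    by (simp_all add: kl)
  have "(fact k :: real) > 0" "(fact l :: real) > 0" "(fact (k + l + 1) :: real) > 0"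
    by simp_all
  then show ?thesis
    unfolding binomial_fact[OF le_add1] Beta fact_sum fact_m fact_n add_diff_cancel_left'
    using assms by (simp add: field_simps del: fact_Suc)
qed

lemma has_integral_Beta_Ioo:
  fixes a b :: real
  assumes "a > 0" "b > 0"
  shows "((\<lambda>t. t powr (a - 1) * (1 - t) powr (b - 1)) has_integral Beta a b) {0<..<1}"
  using has_integral_Beta_real[OF assms] by (simp add: has_integral_Icc_iff_Ioo)

lemma Bernstein_add:
  "Bernstein (m + n) m t = real ((m + n) choose m) * t ^ m * (1 - t) ^ n"
  by (simp add: Bernstein_def)

lemma has_integral_Bernstein:
  "(Bernstein (m + n) m has_integral 1 / (real m + real n + 1)) {0<..<1}"
proof -
  have "((\<lambda>t. t powr (real m + 1 - 1) * (1 - t) powr (real n + 1 - 1))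
      has_integral Beta (real m + 1) (real n + 1)) {0<..<1}"
    by (rule has_integral_Beta_Ioo) auto
  then have "((\<lambda>t. t ^ m * (1 - t) ^ n) has_integral Beta (real m + 1) (real n + 1)) {0<..<1}"
    by (rule has_integral_eq[rotated]) (auto simp: powr_realpow)
  from has_integral_mult_right[OF this, of "real ((m + n) choose m)"] show ?thesis
    unfolding Bernstein_def by (simp add: binomial_mult_Beta_plus_one mult.assoc)
qed

lemma Bernstein_le_one:
  assumes "0 \<le> t" "t \<le> 1"
  shows "Bernstein n k t \<le> 1"
proof (cases "k \<le> n")
  case True
  then have "Bernstein n k t \<le> (\<Sum>j\<le>n. Bernstein n j t)"
    using assms by (intro member_le_sum Bernstein_nonneg) auto
  then show ?thesis by simp
qed (simp add: Bernstein_def binomial_eq_0)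

lemma Bernstein_le_mode:
  fixes t :: real
  assumes "m \<ge> 1" "n \<ge> 1" "0 < t" "t < 1"
  shows "Bernstein (m + n) m t \<le> Bernstein (m + n) m (m / (m + n))"
proof -
  define t0 where "t0 = real m / (real m + real n)"
  have m: "real m > 0" and n: "real n > 0" using assms by auto
  have t0: "0 < t0" "t0 < 1" and t0': "1 - t0 = real n / (real m + real n)"
    using m n by (auto simp: t0_def field_simps)
  have "real m * ln (t / t0) \<le> real m * (t / t0 - 1)"
    using assms t0 m by (intro mult_left_mono ln_le_minus_one) auto
  moreover have "real n * ln ((1 - t) / (1 - t0)) \<le> real n * ((1 - t) / (1 - t0) - 1)"
    using assms t0 n by (intro mult_left_mono ln_le_minus_one) auto
  moreover have "real m * (t / t0 - 1) + real n * ((1 - t) / (1 - t0) - 1) = 0"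
    unfolding t0' using m n by (simp add: t0_def field_simps)
  ultimately have "real m * ln t + real n * ln (1 - t) \<le> real m * ln t0 + real n * ln (1 - t0)"
    using assms t0 by (simp add: ln_div algebra_simps)
  then have "ln (t ^ m * (1 - t) ^ n) \<le> ln (t0 ^ m * (1 - t0) ^ n)"
    using assms t0 by (simp add: ln_mult ln_realpow)
  then have "t ^ m * (1 - t) ^ n \<le> t0 ^ m * (1 - t0) ^ n"
    using assms t0 by simp
  then show ?thesis
    by (simp add: Bernstein_add t0_def mult.assoc mult_left_mono)
qed

text \<open>The balance condition makes the first-order terms of \<open>ln (1 + u)\<close> and \<open>ln (1 - x)\<close> cancel.\<close>

lemma exp_neg_one_le_power_mult_power:
  fixes u x :: real
  assumes "m \<ge> 1" "n \<ge> 2" "0 \<le> u" "0 \<le> x"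
    and balance: "real m * u = real n * x"
    and small: "real m * u^2 + 2 * real n * x^2 \<le> 1"
  shows "exp (-1) \<le> (1 + u) ^ m * (1 - x) ^ n"
proof -
  have "0 \<le> real m * u^2" "0 \<le> 2 * real n * x^2"
    by simp_all
  moreover have "u^2 \<le> real m * u^2" "4 * x^2 \<le> 2 * real n * x^2"
    using assms(1,2) mult_right_mono[of 1 "real m" "u^2"] mult_right_mono[of 4 "2 * real n" "x^2"]
    by simp_all
  ultimately have "u^2 \<le> 1" "x^2 \<le> 1/4"
    using small by linarith+
  then have u: "u \<le> 1" and x: "x \<le> 1/2"
    using power2_le_imp_le[of u 1] power2_le_imp_le[of x "1/2"] by (simp_all add: power_divide)
  have "-1 \<le> real m * (u - u^2) + real n * (- x - 2 * x^2)"
    using balance small by (simp add: algebra_simps)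
  also have "\<dots> \<le> real m * ln (1 + u) + real n * ln (1 - x)"
    using u x assms(3,4)
    by (intro add_mono mult_left_mono ln_one_plus_pos_lower_bound ln_one_minus_pos_lower_bound) auto
  also have "\<dots> = ln ((1 + u) ^ m * (1 - x) ^ n)"
    using assms(3) x by (simp add: ln_mult ln_realpow)
  finally show ?thesis
    using assms(3) x by (simp add: ln_ge_iff)
qed

lemma Bernstein_near_mode:
  fixes h :: real
  assumes "m \<ge> 1" "n \<ge> 2" "0 \<le> h"
    and h: "h^2 \<le> real m * real n / (2 * (real m + real n)^3)"
  shows "exp (-1) * Bernstein (m + n) m (m / (m + n)) \<le> Bernstein (m + n) m (m / (m + n) + h)"
proof -
  define N where "N = real m + real n"
  define u where "u = h * N / real m"
  define x where "x = h * N / real n"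
  have m: "real m \<ge> 1" and n: "real n \<ge> 2" and N: "N > 0"
    using assms by (auto simp: N_def)
  have "real m * u^2 + 2 * real n * x^2 = h^2 * N^2 * ((real n + 2 * real m) / (real m * real n))"
    using m n by (simp add: u_def x_def field_simps power2_eq_square)
  also have "\<dots> \<le> h^2 * N^2 * (2 * N / (real m * real n))"
    using m n by (intro mult_left_mono divide_right_mono) (auto simp: N_def)
  also have "\<dots> \<le> real m * real n / (2 * N^3) * N^2 * (2 * N / (real m * real n))"
    using h m n N by (intro mult_right_mono) (auto simp: N_def)
  also have "\<dots> = 1"
    using m n N by (simp add: field_simps power2_eq_square power3_eq_cube)
  finally have "exp (-1) \<le> (1 + u) ^ m * (1 - x) ^ n"
    using assms m n N
    by (intro exp_neg_one_le_power_mult_power) (auto simp: u_def x_def)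
  moreover have "Bernstein (m + n) m (m / N + h) = Bernstein (m + n) m (m / N) * ((1 + u) ^ m * (1 - x) ^ n)"
  proof -
    have mode_compl: "1 - m / N = n / N"
      using N by (simp add: N_def field_simps)
    have shift: "m / N + h = m / N * (1 + u)"
      using m N by (simp add: u_def field_simps)
    have shift_compl: "1 - (m / N + h) = (1 - m / N) * (1 - x)"
    proof -
      have "1 - (m / N + h) = n / N - h"
        using mode_compl by linarith
      also have "\<dots> = n / N * (1 - x)"
        using n N by (simp add: x_def field_simps)
      finally show ?thesis
        unfolding mode_compl .
    qed
    show ?thesis
      unfolding Bernstein_add shift_compl unfolding shift power_mult_distrib by (simp only: mult_ac)
  qed
  moreover have "Bernstein (m + n) m (m / N) \<ge> 0"
    using m N by (intro Bernstein_nonneg) (auto simp: N_def)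
  ultimately show ?thesis
    unfolding N_def by (metis mult.commute mult_right_mono)
qed

lemma interval_length_mult_le_has_integral:
  fixes f :: "real \<Rightarrow> real"
  assumes f: "(f has_integral I) S" and sub: "{s..s + w} \<subseteq> S" and "w \<ge> 0"
    and nonneg: "\<And>t. t \<in> S \<Longrightarrow> f t \<ge> 0" and lower: "\<And>t. t \<in> {s..s + w} \<Longrightarrow> L \<le> f t"
    and cont: "continuous_on {s..s + w} f"
  shows "w * L \<le> I"
proof -
  have int: "f integrable_on {s..s + w}"
    using cont by (rule integrable_continuous_interval)
  have "w * L = integral {s..s + w} (\<lambda>_. L)"
    using \<open>w \<ge> 0\<close> by simp
  also have "\<dots> \<le> integral {s..s + w} f"
    using int lower by (intro integral_le) auto
  also have "\<dots> \<le> integral S f"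
    using sub int f nonneg by (intro integral_subset_le) (auto simp: has_integral_integrable)
  also have "\<dots> = I"
    using f by (rule integral_unique)
  finally show ?thesis .
qed

lemma Bernstein_mode_window_subset:
  assumes "m \<ge> 1" "n \<ge> 2"
  shows "{m / (m + n) .. m / (m + n) + sqrt (real m * real n / (2 * (real m + real n)^3))} \<subseteq> {0<..<1}"
proof -
  define N where "N = real m + real n"
  define w where "w = sqrt (real m * real n / (2 * N^3))"
  have m: "real m \<ge> 1" and n: "real n \<ge> 2" and N: "N \<ge> real n" "N > 0"
    using assms by (auto simp: N_def)
  have "w \<le> real n / (2 * N)"
  proof (rule power2_le_imp_le)
    have "2 * real m \<le> real n * N"
      using n mult_mono[of 2 "real n" "real m" N] by (simp add: N_def)
    then have "0 \<le> real n * (real n * N - 2 * real m) / (4 * N^3)"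
      using N by simp
    moreover have "(real n / (2 * N))^2 - real m * real n / (2 * N^3)
        = real n * (real n * N - 2 * real m) / (4 * N^3)"
      using N by (simp add: field_simps power2_eq_square power3_eq_cube)
    ultimately show "w^2 \<le> (real n / (2 * N))^2"
      using m N by (simp add: w_def)
  qed (use N in simp)
  also have "\<dots> < real n / N"
    using n N by (simp add: field_simps)
  also have "\<dots> = 1 - m / N"
    using N by (simp add: N_def field_simps)
  finally have "m / N + w < 1"
    by simp
  moreover have "m / N > 0"
    using m N by simp
  ultimately show ?thesis
    unfolding N_def[symmetric] w_def[symmetric] by auto
qed

lemma Bernstein_mode_window_le_integral:
  assumes "m \<ge> 1" "n \<ge> 2"
  shows "sqrt (real m * real n / (2 * (real m + real n)^3)) * (exp (-1) * Bernstein (m + n) m (m / (m + n)))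
    \<le> 1 / (real m + real n + 1)"
proof -
  define t0 where "t0 = real m / (real m + real n)"
  define w where "w = sqrt (real m * real n / (2 * (real m + real n)^3))"
  have "w * (exp (-1) * Bernstein (m + n) m t0) \<le> 1 / (real m + real n + 1)"
  proof (rule interval_length_mult_le_has_integral[OF has_integral_Bernstein])
    show "{t0..t0 + w} \<subseteq> {0<..<1}"
      using Bernstein_mode_window_subset[OF assms] by (simp add: t0_def w_def)
    show "w \<ge> 0"
      by (simp add: w_def)
    show "Bernstein (m + n) m t \<ge> 0" if "t \<in> {0<..<1}" for t
      using that by (intro Bernstein_nonneg) auto
    show "continuous_on {t0..t0 + w} (Bernstein (m + n) m)"
      unfolding Bernstein_def by (intro continuous_intros)
    show "exp (-1) * Bernstein (m + n) m t0 \<le> Bernstein (m + n) m t" if t: "t \<in> {t0..t0 + w}" for t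
    proof -
      obtain h where h: "t = t0 + h" "0 \<le> h" "h \<le> w"
        using t by (intro that[of "t - t0"]) auto
      then have "h^2 \<le> w^2"
        by (intro power_mono)
      then have "h^2 \<le> real m * real n / (2 * (real m + real n)^3)"
        by (simp add: w_def)
      then show ?thesis
        unfolding h(1) t0_def using Bernstein_near_mode[OF assms h(2)] by simp
    qed
  qed
  then show ?thesis
    by (simp add: t0_def w_def)
qed

lemma Bernstein_mode_squared_le:
  assumes "m \<ge> 1" "n \<ge> 2"
  shows "(Bernstein (m + n) m (m / (m + n)))^2 \<le> 2 * exp 2 * (real m + real n) / (real m * real n)"
proof -
  define N where "N = real m + real n"
  define P where "P = Bernstein (m + n) m (m / (m + n))"
  define w where "w = sqrt (real m * real n / (2 * N^3))"
  have m: "real m \<ge> 1" and n: "real n \<ge> 2" and N: "N > 0"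
    using assms by (auto simp: N_def)
  have w: "w > 0" "w^2 = real m * real n / (2 * N^3)"
    using m n N by (simp_all add: w_def)
  have P: "P \<ge> 0"
    using N unfolding P_def by (intro Bernstein_nonneg) (auto simp: N_def)
  have "w * (exp (-1) * P) \<le> 1 / (N + 1)"
    using Bernstein_mode_window_le_integral[OF assms] by (simp add: P_def w_def N_def)
  then have "P * (w * (N + 1)) \<le> exp 1"
    using w N by (simp add: exp_minus field_simps)
  then have "P \<le> exp 1 / (w * (N + 1))"
    using w N by (simp add: pos_le_divide_eq)
  then have "P^2 \<le> (exp 1 / (w * (N + 1)))^2"
    using P by (rule power_mono)
  also have "\<dots> = exp 2 / (w^2 * (N + 1)^2)"
    by (simp add: power_divide power_mult_distrib flip: exp_of_nat_mult)
  also have "\<dots> = 2 * exp 2 * N^3 / (real m * real n * (N + 1)^2)"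
    unfolding w(2) using m n N by (simp add: field_simps)
  also have "\<dots> \<le> 2 * exp 2 * N^3 / (real m * real n * N^2)"
    using m n N by (intro divide_left_mono mult_left_mono power_mono) auto
  also have "\<dots> = 2 * exp 2 * N / (real m * real n)"
    using N by (simp add: field_simps power2_eq_square power3_eq_cube)
  finally show ?thesis
    by (simp add: P_def N_def)
qed

lemma Beta_integrand_eq_Bernstein_powr:
  fixes t \<nu> a b :: real
  assumes "0 < t" "t < 1"
  shows "real ((m + n) choose m) powr \<nu> * (t powr (a - 1) * (1 - t) powr (b - 1))
    = Bernstein (m + n) m t powr \<nu> * (t powr (a - \<nu> * m - 1) * (1 - t) powr (b - \<nu> * n - 1))"
proof -
  have "t powr (a - 1) = (t ^ m) powr \<nu> * t powr (a - \<nu> * m - 1)"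
    "(1 - t) powr (b - 1) = ((1 - t) ^ n) powr \<nu> * (1 - t) powr (b - \<nu> * n - 1)"
    using assms by (simp_all add: powr_realpow[symmetric] powr_powr powr_add[symmetric])
  then show ?thesis
    using assms by (simp add: Bernstein_add powr_mult mult_ac)
qed

lemma binomial_powr_mult_Beta_le_Beta:
  fixes \<nu> \<delta> a b :: real
  assumes "\<nu> \<ge> 0" "\<delta> > 0" "a \<ge> \<nu> * m + \<delta>" "b \<ge> \<nu> * n + \<delta>"
  shows "real ((m + n) choose m) powr \<nu> * Beta a b \<le> Beta \<delta> \<delta>"
proof (rule has_integral_le)
  have "\<nu> * m \<ge> 0" "\<nu> * n \<ge> 0"
    using assms by simp_all
  then have "a > 0" "b > 0"
    using assms by linarith+
  then show "((\<lambda>t. real ((m + n) choose m) powr \<nu> * (t powr (a - 1) * (1 - t) powr (b - 1)))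
      has_integral real ((m + n) choose m) powr \<nu> * Beta a b) {0<..<1}"
    by (intro has_integral_mult_right has_integral_Beta_Ioo)
  show "((\<lambda>t. t powr (\<delta> - 1) * (1 - t) powr (\<delta> - 1)) has_integral Beta \<delta> \<delta>) {0<..<1}"
    using assms by (intro has_integral_Beta_Ioo)
next
  fix t :: real assume "t \<in> {0<..<1}"
  then have t: "0 < t" "t < 1" by auto
  have "Bernstein (m + n) m t powr \<nu> * (t powr (a - \<nu> * m - 1) * (1 - t) powr (b - \<nu> * n - 1))
      \<le> 1 * (t powr (\<delta> - 1) * (1 - t) powr (\<delta> - 1))"
    using t assms
    by (intro mult_mono powr_le1 powr_mono') (auto simp: abs_of_nonneg Bernstein_le_one Bernstein_nonneg)
  then show "real ((m + n) choose m) powr \<nu> * (t powr (a - 1) * (1 - t) powr (b - 1))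
      \<le> t powr (\<delta> - 1) * (1 - t) powr (\<delta> - 1)"
    using t by (simp add: Beta_integrand_eq_Bernstein_powr)
qed

lemma binomial_powr_mult_Beta_le_mode:
  fixes \<nu> a b :: real
  assumes "\<nu> \<ge> 1" "m \<ge> 1" "n \<ge> 1" "a \<ge> \<nu> * m" "b \<ge> \<nu> * n"
  shows "real ((m + n) choose m) powr \<nu> * Beta a b
    \<le> Bernstein (m + n) m (m / (m + n)) powr (\<nu> - 1) * ((real m + real n) / (real m * real n))"
proof -
  define c where "c = real ((m + n) choose m)"
  define P where "P = Bernstein (m + n) m (m / (m + n))"
  have "real m \<ge> 1" "real n \<ge> 1"
    using assms by auto
  then have "a > 0" "b > 0"
    using assms mult_mono[of 1 \<nu> 1 "real m"] mult_mono[of 1 \<nu> 1 "real n"] by auto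
  have "c powr \<nu> * Beta a b \<le> P powr (\<nu> - 1) * (c * Beta m n)"
  proof (rule has_integral_le)
    show "((\<lambda>t. c powr \<nu> * (t powr (a - 1) * (1 - t) powr (b - 1))) has_integral c powr \<nu> * Beta a b) {0<..<1}"
      using \<open>a > 0\<close> \<open>b > 0\<close> by (intro has_integral_mult_right has_integral_Beta_Ioo)
    show "((\<lambda>t. P powr (\<nu> - 1) * (c * (t powr (real m - 1) * (1 - t) powr (real n - 1))))
        has_integral P powr (\<nu> - 1) * (c * Beta m n)) {0<..<1}"
      using assms by (intro has_integral_mult_right has_integral_Beta_Ioo) auto
  next
    fix t :: real assume "t \<in> {0<..<1}"
    then have t: "0 < t" "t < 1" by auto
    define B where "B = Bernstein (m + n) m t"
    have B: "0 < B" "B \<le> P"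
      using t assms by (auto simp: B_def P_def intro: Bernstein_pos Bernstein_le_mode)
    have "c powr \<nu> * (t powr (a - 1) * (1 - t) powr (b - 1))
        = B powr \<nu> * (t powr (a - \<nu> * m - 1) * (1 - t) powr (b - \<nu> * n - 1))"
      using Beta_integrand_eq_Bernstein_powr[OF t] by (simp add: B_def c_def)
    also have "\<dots> = B powr (\<nu> - 1) * (B * (t powr (a - \<nu> * m - 1) * (1 - t) powr (b - \<nu> * n - 1)))"
      using powr_add[of B "\<nu> - 1" 1] B by simp
    also have "\<dots> \<le> P powr (\<nu> - 1) * (B * (t powr (-1) * (1 - t) powr (-1)))"
      using t B assms by (intro mult_mono powr_mono2 powr_mono') auto
    also have "B * (t powr (-1) * (1 - t) powr (-1)) = c * (t powr (real m - 1) * (1 - t) powr (real n - 1))"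
      using Beta_integrand_eq_Bernstein_powr[OF t, of m n 1 m n] t B
      by (simp add: B_def c_def)
    finally show "c powr \<nu> * (t powr (a - 1) * (1 - t) powr (b - 1))
        \<le> P powr (\<nu> - 1) * (c * (t powr (real m - 1) * (1 - t) powr (real n - 1)))" .
  qed
  then show ?thesis
    using binomial_mult_Beta[OF assms(2,3)] by (simp add: c_def P_def)
qed

lemma binomial_powr_mult_Beta_le_min:
  fixes \<nu> a b :: real
  assumes "\<nu> \<ge> 1" "m \<ge> 2" "n \<ge> 2" "a \<ge> \<nu> * m" "b \<ge> \<nu> * n"
  shows "real ((m + n) choose m) powr \<nu> * Beta a b
    \<le> 2 * (4 * exp 2) powr ((\<nu> - 1) / 2) / min (real m) (real n) powr ((\<nu> + 1) / 2)"
proof -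
  define k where "k = min (real m) (real n)"
  define P where "P = Bernstein (m + n) m (m / (m + n))"
  define Q where "Q = (real m + real n) / (real m * real n)"
  have k: "k \<ge> 2"
    using assms by (simp add: k_def)
  have "Q = 1 / real m + 1 / real n"
    using assms by (simp add: Q_def field_simps)
  also have "\<dots> \<le> 1 / k + 1 / k"
    using k by (intro add_mono divide_left_mono) (auto simp: k_def)
  finally have Q: "Q \<le> 2 / k" by simp
  have "P^2 \<le> 2 * exp 2 * Q"
    using Bernstein_mode_squared_le[of m n] assms by (simp add: P_def Q_def)
  also have "\<dots> \<le> 4 * exp 2 / k"
    using mult_left_mono[OF Q, of "2 * exp 2"] by simp
  finally have P2: "P^2 \<le> 4 * exp 2 / k" .
  have P: "P > 0"
  proof -
    have "0 < real m + real n"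
      using assms by simp
    then show ?thesis
      unfolding P_def using assms by (intro Bernstein_pos) auto
  qed
  have "real ((m + n) choose m) powr \<nu> * Beta a b \<le> P powr (\<nu> - 1) * Q"
    using binomial_powr_mult_Beta_le_mode[of \<nu> m n a b] assms by (simp add: P_def Q_def)
  also have "P powr (\<nu> - 1) = (P^2) powr ((\<nu> - 1) / 2)"
  proof -
    have "2 * ((\<nu> - 1) / 2) = \<nu> - 1"
      by simp
    then show ?thesis
      using P powr_powr[of P 2 "(\<nu> - 1) / 2"] by (simp only: powr_numeral)
  qed
  also have "\<dots> * Q \<le> (4 * exp 2 / k) powr ((\<nu> - 1) / 2) * (2 / k)"
    using P2 Q assms by (intro mult_mono powr_mono2) (auto simp: Q_def)
  also have "\<dots> = 2 * (4 * exp 2) powr ((\<nu> - 1) / 2) / (k powr ((\<nu> - 1) / 2) * k powr 1)"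
    using k by (simp add: powr_divide)
  also have "k powr ((\<nu> - 1) / 2) * k powr 1 = k powr ((\<nu> + 1) / 2)"
  proof -
    have "(\<nu> - 1) / 2 + 1 = (\<nu> + 1) / 2"
      by (simp add: field_simps)
    then show ?thesis
      by (simp only: powr_add[symmetric])
  qed
  finally show ?thesis
    by (simp add: k_def)
qed

lemma divide_powr_le_divide_powr:
  fixes A M k s e :: real
  assumes "A \<ge> 0" "M > 0" "k > 0" "M \<le> s * k" "e \<ge> 0"
  shows "A / k powr e \<le> A * s powr e / M powr e"
proof -
  have "s * k > 0"
    using assms by linarith
  then have "s > 0"
    using assms by (simp add: zero_less_mult_iff)
  have "A / k powr e = A * s powr e / (s powr e * k powr e)"
    using \<open>s > 0\<close> assms by simp
  also have "\<dots> \<le> A * s powr e / M powr e"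
    using assms \<open>s > 0\<close> by (intro divide_left_mono) (auto simp: powr_mono2 simp flip: powr_mult)
  finally show ?thesis .
qed

lemma binomial_powr_mult_Beta_floor_le:
  fixes \<nu> \<delta> x y :: real
  assumes "\<nu> \<ge> 1" "\<delta> > 0" "x \<ge> 0" "y \<ge> 0"
  defines "e \<equiv> (\<nu> + 1) / 2"
  shows "real ((nat \<lfloor>x\<rfloor> + nat \<lfloor>y\<rfloor>) choose (nat \<lfloor>x\<rfloor>)) powr \<nu> * Beta (\<nu> * x + \<delta>) (\<nu> * y + \<delta>)
    \<le> max (2 * (4 * exp 2) powr ((\<nu> - 1) / 2) * 2 powr e) (Beta \<delta> \<delta> * 3 powr e)
        / min (x + 1) (y + 1) powr e" (is "_ \<le> ?C / _")
proof -
  define m where "m = nat \<lfloor>x\<rfloor>"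
  define n where "n = nat \<lfloor>y\<rfloor>"
  define M where "M = min (x + 1) (y + 1)"
  have mx: "real m \<le> x" "x < real m + 1" and ny: "real n \<le> y" "y < real n + 1"
    using assms unfolding m_def n_def by linarith+
  have arg_bounds: "\<nu> * x + \<delta> \<ge> \<nu> * m + \<delta>" "\<nu> * y + \<delta> \<ge> \<nu> * n + \<delta>"
    using mx ny assms by (simp_all add: mult_left_mono)
  have M: "M > 0" "e \<ge> 0"
    using assms by (auto simp: M_def e_def)
  have "real ((m + n) choose m) powr \<nu> * Beta (\<nu> * x + \<delta>) (\<nu> * y + \<delta>)
      \<le> ?C / M powr e"
  proof (cases "m \<ge> 2 \<and> n \<ge> 2")
    case True
    then have "M \<le> 2 * min (real m) (real n)"
      using mx ny by (auto simp: M_def)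
    have "real ((m + n) choose m) powr \<nu> * Beta (\<nu> * x + \<delta>) (\<nu> * y + \<delta>)
        \<le> 2 * (4 * exp 2) powr ((\<nu> - 1) / 2) / min (real m) (real n) powr e"
    proof -
      have "\<nu> * m \<le> \<nu> * x + \<delta>" "\<nu> * n \<le> \<nu> * y + \<delta>"
        using arg_bounds assms(2) by linarith+
      then show ?thesis
        using binomial_powr_mult_Beta_le_min[of \<nu> m n] True assms(1) unfolding e_def by simp
    qed
    also have "\<dots> \<le> 2 * (4 * exp 2) powr ((\<nu> - 1) / 2) * 2 powr e / M powr e"
      using True M \<open>M \<le> 2 * min (real m) (real n)\<close> by (intro divide_powr_le_divide_powr) auto
    also have "\<dots> \<le> ?C / M powr e"
      by (intro divide_right_mono) auto
    finally show ?thesis .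
  next
    case False
    then have "M \<le> 3 * 1"
      using mx ny by (auto simp: M_def)
    have "real ((m + n) choose m) powr \<nu> * Beta (\<nu> * x + \<delta>) (\<nu> * y + \<delta>) \<le> Beta \<delta> \<delta> / 1 powr e"
      using binomial_powr_mult_Beta_le_Beta[OF _ assms(2) arg_bounds] assms(1) by simp
    also have "\<dots> \<le> Beta \<delta> \<delta> * 3 powr e / M powr e"
      using M assms \<open>M \<le> 3 * 1\<close> by (intro divide_powr_le_divide_powr) (auto simp: Beta_def)
    also have "\<dots> \<le> ?C / M powr e"
      by (intro divide_right_mono) auto
    finally show ?thesis .
  qed
  then show ?thesis
    by (simp add: m_def n_def M_def)
qed

theorem lemma7p1:
  fixes \<nu> \<delta> :: real
  assumes "\<nu> \<ge> 1" and "\<delta> > 0"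
  shows "\<exists>C::real. C \<ge> 1 \<and> (\<forall>x y :: real. x \<ge> 0 \<longrightarrow> y \<ge> 0 \<longrightarrow>
    real ((nat \<lfloor>x\<rfloor> + nat \<lfloor>y\<rfloor>) choose (nat \<lfloor>x\<rfloor>)) powr \<nu>
      * Beta (\<nu> * x + \<delta>) (\<nu> * y + \<delta>)
    \<le> C / (min (x + 1) (y + 1)) powr ((\<nu> + 1) / 2))"
proof (intro exI conjI allI impI)
  define e where "e = (\<nu> + 1) / 2"
  define C0 where "C0 = max (2 * (4 * exp 2) powr ((\<nu> - 1) / 2) * 2 powr e) (Beta \<delta> \<delta> * 3 powr e)"
  show "max 1 C0 \<ge> 1" by simp
  fix x y :: real assume "x \<ge> 0" "y \<ge> 0"
  then have "real ((nat \<lfloor>x\<rfloor> + nat \<lfloor>y\<rfloor>) choose (nat \<lfloor>x\<rfloor>)) powr \<nu> * Beta (\<nu> * x + \<delta>) (\<nu> * y + \<delta>)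
      \<le> C0 / min (x + 1) (y + 1) powr e"
    using binomial_powr_mult_Beta_floor_le[OF assms] by (simp add: C0_def e_def)
  also have "\<dots> \<le> max 1 C0 / min (x + 1) (y + 1) powr e"
    by (intro divide_right_mono) auto
  finally show "real ((nat \<lfloor>x\<rfloor> + nat \<lfloor>y\<rfloor>) choose (nat \<lfloor>x\<rfloor>)) powr \<nu> * Beta (\<nu> * x + \<delta>) (\<nu> * y + \<delta>)
      \<le> max 1 C0 / min (x + 1) (y + 1) powr ((\<nu> + 1) / 2)"
    by (simp add: e_def)
qed

end
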